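(* Let $r\geq 1$ be odd and $m\geq 3$. For every integer $j$ with $1\leq j\leq \frac{2^{rm}-1}{2^{m}-1}-1$, we have $\mathrm{wt}_{rm}((2^m-1)j)\leq rm-m$.
   Context: For an integer $0\le i\le 2^k-1$, $\mathrm{wt}_k(i)$ denotes the number of $1$'s in the binary expansion of $i$. (Here $(2^m-1)j<2^{rm}-1$.) *)

theory Defs
  imports Main
begin

definition wt :: "nat \<Rightarrow> nat \<Rightarrow> nat" where
  "wt k i = card {b. b < k \<and> bit i b}"

end

theory Submission
  imports Defs "HOL-Number_Theory.Cong"
begin

text \<open>Write \<open>x = (2^m - 1) j\<close> and let \<open>y = (2^(rm) - 1) - x\<close> be its bitwise complement
  in \<open>rm\<close> bits, so that \<open>wt x + wt y = rm\<close>. Since \<open>2^m - 1\<close> divides \<open>2^(rm) - 1\<close> and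
  \<open>j\<close> is below the quotient, \<open>y\<close> is again a positive multiple of \<open>2^m - 1\<close>. Every such
  multiple has at least \<open>m\<close> ones: cutting \<open>y = q 2^m + s\<close> with \<open>s < 2^m\<close> and passing to
  \<open>q + s\<close> keeps the residue modulo \<open>2^m - 1\<close>, strictly decreases the number and does
  not increase the binary weight, and the process ends at \<open>2^m - 1\<close> itself.\<close>

function popcount :: "nat \<Rightarrow> nat" where
  "popcount n = (if n = 0 then 0 else n mod 2 + popcount (n div 2))"
  by auto
termination by (relation "measure id") auto

declare popcount.simps [simp del]

lemma popcount_0 [simp]: "popcount 0 = 0"
  by (simp add: popcount.simps)

lemma popcount_rec: "popcount n = n mod 2 + popcount (n div 2)"
  by (cases "n = 0") (simp_all add: popcount.simps [of n])

lemma popcount_double_add: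
  assumes "b < 2"
  shows "popcount (2 * n + b) = b + popcount n"
  using assms by (subst popcount_rec) simp

lemma popcount_add_le: "popcount (a + b) \<le> popcount a + popcount b"
proof (induction "a + b" arbitrary: a b rule: less_induct)
  case less
  show ?case
  proof (cases "a = 0 \<or> b = 0")
    case True
    then show ?thesis by auto
  next
    case False
    have pa: "popcount a = a mod 2 + popcount (a div 2)"
     and pb: "popcount b = b mod 2 + popcount (b div 2)"
     and pab: "popcount (a + b) = (a + b) mod 2 + popcount ((a + b) div 2)"
      by (rule popcount_rec)+
    show ?thesis
    proof (cases "odd a \<and> odd b")
      case True
      \<comment> \<open>the carry is absorbed as a third summand \<open>1\<close>\<close>
      have "(a + b) div 2 = a div 2 + (b div 2 + 1)" "(a + b) mod 2 = 0"
        using True by presburger+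
      moreover have "popcount (a div 2 + (b div 2 + 1)) \<le> popcount (a div 2) + popcount (b div 2 + 1)"
        by (rule less) (use True False in presburger)
      moreover have "popcount (b div 2 + 1) \<le> popcount (b div 2) + popcount 1"
        by (rule less) (use True False in presburger)
      moreover have "popcount 1 = 1"
        by (subst popcount_rec) simp
      ultimately show ?thesis
        using pa pb pab True by (simp add: odd_iff_mod_2_eq_one)
    next
      case no_carry: False
      have "(a + b) div 2 = a div 2 + b div 2" "(a + b) mod 2 = a mod 2 + b mod 2"
        using no_carry by presburger+
      moreover have "popcount (a div 2 + b div 2) \<le> popcount (a div 2) + popcount (b div 2)"
        by (rule less) (use False in presburger)
      ultimately show ?thesis
        using pa pb pab by simp
    qed
  qed
qed

lemma popcount_mult_power2_add:
  assumes "s < 2 ^ m"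
  shows "popcount (q * 2 ^ m + s) = popcount q + popcount s"
  using assms
proof (induction m arbitrary: s)
  case 0
  then show ?case by simp
next
  case (Suc m)
  have split: "q * 2 ^ Suc m + s = 2 * (q * 2 ^ m + s div 2) + s mod 2"
    by simp
  have "popcount (q * 2 ^ Suc m + s) = s mod 2 + popcount (q * 2 ^ m + s div 2)"
    unfolding split by (rule popcount_double_add) simp
  also have "\<dots> = popcount q + (s mod 2 + popcount (s div 2))"
    using Suc by simp
  finally show ?case
    by (simp add: popcount_rec [of s])
qed

lemma popcount_mask: "popcount (2 ^ m - 1) = m"
proof (induction m)
  case 0
  then show ?case by simp
next
  case (Suc m)
  have "(2::nat) ^ m \<ge> 1"
    by simp
  then have split: "(2::nat) ^ Suc m - 1 = 2 * (2 ^ m - 1) + 1"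
    by (simp only: power_Suc)
  show ?case
    unfolding split using Suc by (subst popcount_double_add) simp_all
qed

lemma popcount_add_complement:
  assumes "i < 2 ^ k"
  shows "popcount i + popcount (2 ^ k - 1 - i) = k"
  using assms
proof (induction k arbitrary: i)
  case 0
  then show ?case by simp
next
  case (Suc k)
  have split: "(2::nat) ^ Suc k - 1 - i = 2 * (2 ^ k - 1 - i div 2) + (1 - i mod 2)"
    using Suc.prems by (simp add: algebra_simps) presburger
  have "popcount (2 ^ Suc k - 1 - i) = (1 - i mod 2) + popcount (2 ^ k - 1 - i div 2)"
    unfolding split by (rule popcount_double_add) simp
  moreover have "popcount (i div 2) + popcount (2 ^ k - 1 - i div 2) = k"
    using Suc by simp
  moreover have "i mod 2 \<le> 1"
    by simp
  ultimately show ?case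
    by (simp add: popcount_rec [of i])
qed

lemma popcount_ge_of_mask_dvd:
  assumes "y > 0" and "(2 ^ m - 1) dvd y"
  shows "m \<le> popcount y"
  using assms
proof (induction y rule: less_induct)
  case (less y)
  have mask_le: "2 ^ m - 1 \<le> y"
    using less.prems by (rule dvd_imp_le [rotated])
  show ?case
  proof (cases "y < 2 ^ m")
    case True
    then have "y = 2 ^ m - 1"
      using mask_le by linarith
    then show ?thesis
      using popcount_mask by simp
  next
    case False
    define q s where "q = y div 2 ^ m" and "s = y mod 2 ^ m"
    have y: "y = q * 2 ^ m + s"
      unfolding q_def s_def by (rule div_mult_mod_eq [symmetric])
    have "q > 0"
      using False by (simp add: q_def div_greater_zero_iff)
    have "2 ^ m - 1 \<noteq> (0::nat)"
      using less.prems by auto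
    have "q * 2 ^ m = q * Suc (2 ^ m - 1)"
      by simp
    then have y_fold: "y = q * (2 ^ m - 1) + (q + s)"
      unfolding y mult_Suc_right by simp
    then have "q + s < y"
      using \<open>q > 0\<close> \<open>2 ^ m - 1 \<noteq> 0\<close> by simp
    moreover have "(2 ^ m - 1) dvd (q + s)"
      using less.prems(2) y_fold by (simp add: dvd_add_right_iff)
    ultimately have "m \<le> popcount (q + s)"
      using less.IH \<open>q > 0\<close> by simp
    also have "\<dots> \<le> popcount q + popcount s"
      by (rule popcount_add_le)
    also have "\<dots> = popcount y"
      unfolding y by (rule popcount_mult_power2_add [symmetric]) (simp add: s_def)
    finally show ?thesis .
  qed
qed

lemma wt_Suc: "wt (Suc k) i = i mod 2 + wt k (i div 2)"
proof -
  have "{b. b < Suc k \<and> bit i b} = (if odd i then {0} else {}) \<union> Suc ` {b. b < k \<and> bit (i div 2) b}"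
    by (auto simp: bit_Suc bit_0 image_iff less_Suc_eq_0_disj)
  then show ?thesis
    unfolding wt_def by (simp add: card_image card_insert_if odd_iff_mod_2_eq_one image_iff)
qed

lemma wt_eq_popcount:
  assumes "i < 2 ^ k"
  shows "wt k i = popcount i"
  using assms
proof (induction k arbitrary: i)
  case 0
  then show ?case by (simp add: wt_def)
next
  case (Suc k)
  then show ?case
    by (simp add: wt_Suc popcount_rec [of i])
qed

lemma mask_dvd_mask_mult: "(2 ^ m - 1 :: nat) dvd 2 ^ (r * m) - 1"
proof -
  have "(2::nat) ^ m = 1 + (2 ^ m - 1)"
    by simp
  then have "[(2::nat) ^ m = 1] (mod 2 ^ m - 1)"
    by (metis cong_def mod_add_self2)
  then have "[(2::nat) ^ (r * m) = 1] (mod 2 ^ m - 1)"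
    by (metis cong_pow power_mult mult.commute power_one)
  then show ?thesis
    by (simp add: cong_altdef_nat)
qed

theorem lemma4:
  fixes r m j :: nat
  assumes "r \<ge> 1" and "odd r" and "m \<ge> 3"
    and "1 \<le> j" and "j \<le> (2 ^ (r * m) - 1) div (2 ^ m - 1) - 1"
  shows "wt (r * m) ((2 ^ m - 1) * j) \<le> r * m - m"
  \<comment> \<open>of the hypotheses on \<open>r\<close> and \<open>m\<close> only \<open>m \<ge> 1\<close> is used\<close>
proof -
  define M :: nat where "M = 2 ^ m - 1"
  define Q where "Q = (2 ^ (r * m) - 1) div M"
  define x where "x = M * j"
  have mask: "2 ^ (r * m) - 1 = M * Q"
    using mask_dvd_mask_mult [of m r] by (simp add: M_def Q_def)
  have "j < Q"
    using assms(4,5) by (simp add: Q_def M_def)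
  have complement: "2 ^ (r * m) - 1 - x = M * (Q - j)"
    by (simp only: mask x_def diff_mult_distrib2)
  have "x \<le> 2 ^ (r * m) - 1"
    using \<open>j < Q\<close> by (simp only: mask x_def mult_le_mono2 less_imp_le)
  then have "x < 2 ^ (r * m)"
    by (simp add: le_diff_conv2 less_eq_Suc_le)
  have "M > 0"
    unfolding M_def using one_less_power [of "2::nat" m] assms(3) by simp
  then have "m \<le> popcount (2 ^ (r * m) - 1 - x)"
    unfolding complement using \<open>j < Q\<close> by (intro popcount_ge_of_mask_dvd) (simp_all add: M_def)
  moreover have "popcount x + popcount (2 ^ (r * m) - 1 - x) = r * m"
    using \<open>x < 2 ^ (r * m)\<close> by (rule popcount_add_complement)
  ultimately show ?thesis
    using \<open>x < 2 ^ (r * m)\<close> by (simp add: wt_eq_popcount x_def M_def)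
qed

end
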